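(* Let $S\subset\mathbb C^3_{x,y,z}$ be the smooth surface $x+y+xyz=1$, and let $L_1=\{x=0\}$, $L_2=\{yz+1=0\}$, $L_3=\{y=0\}$, $L_4=\{xz+1=0\}$, $L_5=\{z=0\}$ (zero loci in $S$); these are lines in $S$ (explicitly $L_1=\{(0,1,z)\}$, $L_2=\{(x,1,-1)\}$, $L_3=\{(1,0,z)\}$, $L_4=\{(1,y,-1)\}$, $L_5=\{(x,1-x,0)\}$). Then for every non-constant morphism $\phi:\mathbb C\to S$ the image $\phi(\mathbb C)$ is contained in one of $L_1,\dots,L_5$; i.e. $L_1,\dots,L_5$ are the only polynomial curves in $S$.
   Context: A polynomial curve in $S$ is the image of a non-constant morphism $\mathbb C\to S$. *)

theory Defs
  imports "HOL-Computational_Algebra.Polynomial"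
begin

definition surfS :: "(complex \<times> complex \<times> complex) set" where
  "surfS = {(x,y,z). x + y + x*y*z = 1}"

definition lineL :: "nat \<Rightarrow> (complex \<times> complex \<times> complex) set" where
  "lineL i = (if i = 1 then {(x,y,z) \<in> surfS. x = 0}
         else if i = 2 then {(x,y,z) \<in> surfS. y*z + 1 = 0}
         else if i = 3 then {(x,y,z) \<in> surfS. y = 0}
         else if i = 4 then {(x,y,z) \<in> surfS. x*z + 1 = 0}
         else if i = 5 then {(x,y,z) \<in> surfS. z = 0}
         else {})"

text \<open>A morphism C -> C^3 is given by three polynomials; its map.\<close>
definition polymap :: "complex poly \<Rightarrow> complex poly \<Rightarrow> complex poly \<Rightarrow> complex \<Rightarrow> complex \<times> complex \<times> complex" where
  "polymap p q r t = (poly p t, poly q t, poly r t)"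

end

theory Submission
  imports Defs
begin

(* A polynomial curve t \<mapsto> (p t, q t, r t) lies on S iff the
   polynomial identity  p + q + p*q*r = 1  holds.  We classify the solutions of
   this identity over an arbitrary integral domain:
   - if r \<noteq> 0, comparing degrees (deg (p*q*r) = deg p + deg q + deg r, while
     deg (1 - p - q) \<le> max (deg p) (deg q)) forces p or q to be constant;
   - if p = a is constant, the identity reads  q * (1 + a*r) = 1 - a,  so either
     a = 0, or a = 1 and q*(1 + r) = 0, or 1 - a \<noteq> 0 and then q and 1 + a*r
     have degree 0, which makes the whole curve constant.
   Hence a non-constant solution has r = 0, p = 0, q = 0, (p,r) = (1,-1) or
   (q,r) = (1,-1); these are exactly the curves inside L5, L1, L3, L4, L2. *)

(* With r \<noteq> 0 the cubic term p*q*r is too large unless p or q is constant. *)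
lemma surface_identity_constant_coordinate:
  fixes p q r :: "'a::idom poly"
  assumes eq: "p + q + p*q*r = 1" and r: "r \<noteq> 0"
  shows "degree p = 0 \<or> degree q = 0"
proof (rule ccontr)
  assume "\<not> (degree p = 0 \<or> degree q = 0)"
  hence dp: "degree p > 0" and dq: "degree q > 0" by auto
  hence "p \<noteq> 0" "q \<noteq> 0" by auto
  hence "degree (p*q*r) = degree p + degree q + degree r"
    using r by (simp add: degree_mult_eq)
  moreover have "p*q*r = 1 - p - q"
    using eq by (simp add: algebra_simps)
  moreover have "degree (1 - p - q) \<le> max (degree p) (degree q)"
    using degree_diff_le_max[of 1 p] degree_diff_le_max[of "1 - p" q] by simp
  ultimately show False using dp dq by simp
qed

(* If the first coordinate is the constant a, the identity becomes
   q * (1 + a r) = 1 - a; unless a \<in> {0,1} both factors must be constants. *)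
lemma surface_identity_first_constant:
  fixes q r :: "'a::idom poly" and a :: 'a
  assumes eq: "[:a:] + q + [:a:]*q*r = 1" and r: "r \<noteq> 0"
  shows "a = 0 \<or> (a = 1 \<and> (q = 0 \<or> r = -1)) \<or> (degree q = 0 \<and> degree r = 0)"
proof -
  have "q * (1 + smult a r) = 1 - [:a:]"
    using eq by (simp add: algebra_simps)
  also have "1 - [:a:] = [:1 - a:]" by (simp add: one_pCons)
  finally have factored: "q * (1 + smult a r) = [:1 - a:]" .
  consider "a = 0" | "a = 1" | "a \<noteq> 0" "a \<noteq> 1" by blast
  then show ?thesis
  proof cases
    case 2
    hence "q * (1 + r) = 0" using factored by simp
    hence "q = 0 \<or> r = -1" by (simp add: add_eq_0_iff)
    with 2 show ?thesis by blast
  next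
    case 3
    hence "q \<noteq> 0" "1 + smult a r \<noteq> 0" using factored by auto
    hence "degree q + degree (1 + smult a r) = 0"
      using degree_mult_eq[of q "1 + smult a r"] factored by simp
    hence dq: "degree q = 0" and d1: "degree (1 + smult a r) = 0" by auto
    have "degree r = 0"
    proof (rule ccontr)
      assume "degree r \<noteq> 0"
      hence "degree (1 + smult a r) = degree r"
        using degree_add_eq_right[of 1 "smult a r"] \<open>a \<noteq> 0\<close> by simp
      with d1 \<open>degree r \<noteq> 0\<close> show False by simp
    qed
    with dq show ?thesis by blast
  qed simp
qed

lemma surface_identity_solutions:
  fixes p q r :: "'a::idom poly"
  assumes eq: "p + q + p*q*r = 1"
    and nonconst: "\<not> (degree p = 0 \<and> degree q = 0 \<and> degree r = 0)"
  shows "r = 0 \<or> p = 0 \<or> q = 0 \<or> (p = 1 \<and> r = -1) \<or> (q = 1 \<and> r = -1)"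
proof (cases "r = 0")
  case False
  (* the case of a constant first coordinate; by symmetry it also covers q *)
  have first_const: "u = 0 \<or> v = 0 \<or> (u = 1 \<and> r = -1)"
    if uv: "u + v + u*v*r = 1" "degree u = 0" "\<not> (degree v = 0 \<and> degree r = 0)"
    for u v :: "'a poly"
  proof -
    obtain a where u: "u = [:a:]" using uv(2) degree_eq_zeroE by blast
    show ?thesis
      using surface_identity_first_constant[of a v r] uv u \<open>r \<noteq> 0\<close>
      by (auto simp: one_pCons)
  qed
  have swapped: "q + p + q*p*r = 1" using eq by (simp add: algebra_simps)
  show ?thesis
    using surface_identity_constant_coordinate[OF eq False] nonconst
      first_const[OF eq] first_const[OF swapped] by metis
qed simp

lemma polymap_constant:
  assumes "degree p = 0" "degree q = 0" "degree r = 0"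
  shows "\<exists>c. \<forall>t. polymap p q r t = c"
  using assms by (auto simp: polymap_def elim!: degree_eq_zeroE)

theorem lemma8p10:
  fixes p q r :: "complex poly"
  assumes "\<forall>t. polymap p q r t \<in> surfS"
    and "\<not> (\<exists>c. \<forall>t. polymap p q r t = c)"
  shows "\<exists>i\<in>{1..5::nat}. range (polymap p q r) \<subseteq> lineL i"
proof -
  have on_S: "\<And>t. polymap p q r t \<in> surfS" using assms(1) by blast
  have "poly (p + q + p*q*r) = poly 1"
    using on_S by (auto simp: fun_eq_iff polymap_def surfS_def)
  hence eq: "p + q + p*q*r = 1" by (simp add: poly_eq_poly_eq_iff)
  have "\<not> (degree p = 0 \<and> degree q = 0 \<and> degree r = 0)"
    using polymap_constant assms(2) by blast
  from surface_identity_solutions[OF eq this] show ?thesis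
  proof (elim disjE conjE)
    assume "r = 0" thus ?thesis using on_S by (intro bexI[of _ 5]) (auto simp: lineL_def polymap_def)
  next
    assume "p = 0" thus ?thesis using on_S by (intro bexI[of _ 1]) (auto simp: lineL_def polymap_def)
  next
    assume "q = 0" thus ?thesis using on_S by (intro bexI[of _ 3]) (auto simp: lineL_def polymap_def)
  next
    assume "p = 1" "r = -1" thus ?thesis using on_S by (intro bexI[of _ 4]) (auto simp: lineL_def polymap_def)
  next
    assume "q = 1" "r = -1" thus ?thesis using on_S by (intro bexI[of _ 2]) (auto simp: lineL_def polymap_def)
  qed
qed

end
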